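(* Let $G$ be a topological group and let $X$ be a $G$-Banach space, i.e. a (real) Banach space equipped with a continuous action of $G$ by linear isometries. Then there exists an equivalent norm $\|\cdot\|'$ on $X$ that is strictly convex and $G$-invariant (i.e. $\|g\cdot x\|'=\|x\|'$ for all $g\in G$, $x\in X$) if and only if there exist a strictly convex $G$-Banach space $Y$ and a bounded injective $G$-equivariant linear operator from $X$ to $Y$.
   Context: A linear operator $\phi:X\to Y$ between $G$-Banach spaces is $G$-equivariant if $\phi(g\cdot x)=g\cdot\phi(x)$ for all $g\in G$, $x\in X$. A norm $\|\cdot\|$ is strictly convex if for every $x\neq y$ with $\|x\|=\|y\|$ one has $\|\frac{x+y}{2}\|<\|x\|$. *)

theory Defs
  imports "HOL-Analysis.Analysis" "HOL-Algebra.Group"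
begin

definition topological_group :: "('g, 'm) monoid_scheme \<Rightarrow> 'g topology \<Rightarrow> bool" where
  "topological_group G T \<longleftrightarrow>
     group G \<and> topspace T = carrier G \<and>
     continuous_map (prod_topology T T) T (\<lambda>p. fst p \<otimes>\<^bsub>G\<^esub> snd p) \<and>
     continuous_map T T (\<lambda>g. inv\<^bsub>G\<^esub> g)"

definition is_norm :: "('a::real_vector \<Rightarrow> real) \<Rightarrow> bool" where
  "is_norm N \<longleftrightarrow>
     (\<forall>x. N x \<ge> 0) \<and> (\<forall>x. N x = 0 \<longleftrightarrow> x = 0) \<and>
     (\<forall>a x. N (a *\<^sub>R x) = \<bar>a\<bar> * N x) \<and>
     (\<forall>x y. N (x + y) \<le> N x + N y)"

definition banach_norm :: "('a::real_vector \<Rightarrow> real) \<Rightarrow> bool" where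
  "banach_norm N \<longleftrightarrow> is_norm N \<and>
     (\<forall>s::nat \<Rightarrow> 'a. (\<forall>e>0. \<exists>M. \<forall>m\<ge>M. \<forall>n\<ge>M. N (s m - s n) < e) \<longrightarrow>
        (\<exists>l. (\<lambda>n. N (s n - l)) \<longlonglongrightarrow> 0))"

definition strictly_convex_norm :: "('a::real_vector \<Rightarrow> real) \<Rightarrow> bool" where
  "strictly_convex_norm N \<longleftrightarrow>
     (\<forall>x y. x \<noteq> y \<and> N x = N y \<longrightarrow> N ((1/2) *\<^sub>R (x + y)) < N x)"

definition equivalent_norms :: "('a::real_vector \<Rightarrow> real) \<Rightarrow> ('a \<Rightarrow> real) \<Rightarrow> bool" where
  "equivalent_norms N1 N2 \<longleftrightarrow>
     (\<exists>c C. 0 < c \<and> 0 < C \<and> (\<forall>x. c * N1 x \<le> N2 x \<and> N2 x \<le> C * N1 x))"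

definition G_banach_space ::
  "('g, 'm) monoid_scheme \<Rightarrow> 'g topology \<Rightarrow> ('g \<Rightarrow> 'a \<Rightarrow> 'a) \<Rightarrow> ('a::real_vector \<Rightarrow> real) \<Rightarrow> bool" where
  "G_banach_space G T act N \<longleftrightarrow>
     banach_norm N \<and>
     (\<forall>x. act \<one>\<^bsub>G\<^esub> x = x) \<and>
     (\<forall>g\<in>carrier G. \<forall>h\<in>carrier G. \<forall>x. act (g \<otimes>\<^bsub>G\<^esub> h) x = act g (act h x)) \<and>
     (\<forall>g\<in>carrier G. linear (act g)) \<and>
     (\<forall>g\<in>carrier G. \<forall>x. N (act g x) = N x) \<and>
     (\<forall>g0\<in>carrier G. \<forall>x0. \<forall>e>0. \<exists>U d. openin T U \<and> g0 \<in> U \<and> d > 0 \<and>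
        (\<forall>g\<in>U. \<forall>x. N (x - x0) < d \<longrightarrow> N (act g x - act g0 x0) < e))"

definition bounded_inj_equivariant ::
  "('g, 'm) monoid_scheme \<Rightarrow> ('g \<Rightarrow> 'a \<Rightarrow> 'a) \<Rightarrow> ('a::real_vector \<Rightarrow> real) \<Rightarrow>
   ('g \<Rightarrow> 'b \<Rightarrow> 'b) \<Rightarrow> ('b::real_vector \<Rightarrow> real) \<Rightarrow> ('a \<Rightarrow> 'b) \<Rightarrow> bool" where
  "bounded_inj_equivariant G actX NX actY NY phi \<longleftrightarrow>
     linear phi \<and> inj phi \<and> (\<exists>C. \<forall>x. NY (phi x) \<le> C * NX x) \<and>
     (\<forall>g\<in>carrier G. \<forall>x. phi (actX g x) = actY g (phi x))"

end

theory Submission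
  imports Defs
begin

text \<open>If \<open>\<parallel>\<cdot>\<parallel>'\<close> is an equivalent strictly convex invariant norm, then \<open>(X, \<parallel>\<cdot>\<parallel>')\<close> is itself a strictly
  convex \<open>G\<close>-Banach space and the identity is the required operator. Conversely, given
  \<open>\<phi> : X \<rightarrow> Y\<close>, the norm \<open>\<parallel>x\<parallel>' = \<parallel>x\<parallel> + \<parallel>\<phi> x\<parallel>\<^sub>Y\<close> is equivalent and invariant, and it is strictly convex:
  equality in its triangle inequality forces equality in that of the strictly convex
  norm \<open>\<parallel>\<phi> \<cdot>\<parallel>\<^sub>Y\<close>, hence positive proportionality of the two vectors.\<close>

lemma is_norm_ge_zero: "is_norm N \<Longrightarrow> N x \<ge> 0"
  and is_norm_eq_zero_iff: "is_norm N \<Longrightarrow> N x = 0 \<longleftrightarrow> x = 0"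
  and is_norm_scaleR: "is_norm N \<Longrightarrow> N (a *\<^sub>R x) = \<bar>a\<bar> * N x"
  and is_norm_triangle: "is_norm N \<Longrightarrow> N (x + y) \<le> N x + N y"
  unfolding is_norm_def by auto

lemma is_norm_norm: "is_norm norm"
  unfolding is_norm_def by (auto intro: norm_triangle_ineq)

lemma is_norm_pos: "is_norm N \<Longrightarrow> x \<noteq> 0 \<Longrightarrow> N x > 0"
  using is_norm_ge_zero is_norm_eq_zero_iff by (metis order_le_less)

lemma is_norm_add:
  assumes "is_norm N1" "is_norm N2"
  shows "is_norm (\<lambda>x. N1 x + N2 x)"
  unfolding is_norm_def
proof (intro conjI allI)
  fix x y
  show "N1 (x + y) + N2 (x + y) \<le> N1 x + N2 x + (N1 y + N2 y)"
    using is_norm_triangle[OF assms(1), of x y] is_norm_triangle[OF assms(2), of x y] by simp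
qed (use assms in \<open>auto simp: is_norm_def distrib_left add_nonneg_eq_0_iff\<close>)

lemma is_norm_comp_linear:
  assumes "is_norm N" "linear f" "inj f"
  shows "is_norm (\<lambda>x. N (f x))"
  using assms linear_injective_0[OF assms(2)]
  unfolding is_norm_def by (auto simp: linear_add linear_scale linear_0)

lemma strictly_convex_norm_iff_triangle:
  assumes "is_norm N"
  shows "strictly_convex_norm N \<longleftrightarrow> (\<forall>x y. x \<noteq> y \<and> N x = N y \<longrightarrow> N (x + y) < N x + N y)"
proof -
  have half: "N ((1/2) *\<^sub>R z) = N z / 2" for z using is_norm_scaleR[OF assms, of "1/2" z] by simp
  show ?thesis unfolding strictly_convex_norm_def half by (simp add: mult.commute)
qed

text \<open>Rescale the longer vector to the length of the shorter one; the reverse triangle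
  inequality shows that the rescaled pair still attains equality, so the two coincide.\<close>
lemma strictly_convex_norm_triangle_eq:
  assumes N: "is_norm N" and sc: "strictly_convex_norm N" and eq: "N (u + v) = N u + N v"
  shows "N v *\<^sub>R u = N u *\<^sub>R v"
proof -
  have sc': "N (x + y) < N x + N y" if "x \<noteq> y" "N x = N y" for x y
    using sc that unfolding strictly_convex_norm_iff_triangle[OF N] by blast
  have one_sided: "N v *\<^sub>R u = N u *\<^sub>R v" if eq: "N (u + v) = N u + N v" and le: "N u \<le> N v" for u v
  proof (cases "u = 0")
    case False
    then have pos: "0 < N u" "0 < N v" using is_norm_pos[OF N] le by force+
    define v' where "v' = (N u / N v) *\<^sub>R v"
    have Nv': "N v' = N u" using pos by (simp add: v'_def is_norm_scaleR[OF N])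
    have "v - v' = (1 - N u / N v) *\<^sub>R v" by (simp add: v'_def algebra_simps)
    then have "N (v - v') = (1 - N u / N v) * N v" using pos le by (simp add: is_norm_scaleR[OF N])
    then have "N (v - v') = N v - N u" using pos by (simp add: left_diff_distrib)
    moreover have "N (u + v) \<le> N (u + v') + N (v - v')"
      using is_norm_triangle[OF N, of "u + v'" "v - v'"] by simp
    ultimately have "\<not> N (u + v') < N u + N v'" using eq Nv' by linarith
    then have "u = v'" using sc' Nv' by metis
    moreover have "N v *\<^sub>R v' = N u *\<^sub>R v" using pos by (simp add: v'_def)
    ultimately show ?thesis by simp
  qed (simp add: is_norm_eq_zero_iff[OF N])
  show ?thesis
    using one_sided[OF eq] one_sided[of v u] eq by (metis add.commute linorder_linear)
qed

lemma strictly_convex_norm_comp_linear: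
  assumes "strictly_convex_norm N" "linear f" "inj f"
  shows "strictly_convex_norm (\<lambda>x. N (f x))"
  using assms unfolding strictly_convex_norm_def
  by (auto simp: linear_add linear_scale dest: injD)

lemma strictly_convex_norm_add:
  assumes N1: "is_norm N1" and N2: "is_norm N2" and sc: "strictly_convex_norm N2"
  shows "strictly_convex_norm (\<lambda>x. N1 x + N2 x)"
proof -
  have N: "is_norm (\<lambda>x. N1 x + N2 x)" using N1 N2 by (rule is_norm_add)
  show ?thesis
    unfolding strictly_convex_norm_iff_triangle[OF N]
  proof (intro allI impI; erule conjE; rule ccontr)
    fix x y assume "x \<noteq> y" and same: "N1 x + N2 x = N1 y + N2 y"
      and "\<not> N1 (x + y) + N2 (x + y) < N1 x + N2 x + (N1 y + N2 y)"
    then have "N2 (x + y) = N2 x + N2 y"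
      using is_norm_triangle[OF N1, of x y] is_norm_triangle[OF N2, of x y] by linarith
    then have proportional: "N2 y *\<^sub>R x = N2 x *\<^sub>R y" by (rule strictly_convex_norm_triangle_eq[OF N2 sc])
    then have "N2 y * (N1 x + N2 x) = N2 x * (N1 y + N2 y)"
      using is_norm_scaleR[OF N1] is_norm_scaleR[OF N2] is_norm_ge_zero[OF N2]
      by (metis abs_of_nonneg distrib_left)
    then have "N2 x = N2 y \<or> (x = 0 \<and> y = 0)"
      using same is_norm_pos[OF N] by (metis mult_right_cancel order_less_irrefl)
    then show False
      using proportional \<open>x \<noteq> y\<close> is_norm_eq_zero_iff[OF N2] by (metis scaleR_cancel_left)
  qed
qed

lemma equivalent_norms_add_dominated:
  assumes "is_norm N2" and "\<And>x. N2 x \<le> C * N1 x" and "\<And>x. N1 x \<ge> 0"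
  shows "equivalent_norms N1 (\<lambda>x. N1 x + N2 x)"
  unfolding equivalent_norms_def
proof (intro exI conjI allI)
  fix x
  show "1 * N1 x \<le> N1 x + N2 x" using is_norm_ge_zero[OF assms(1)] by simp
  have "C * N1 x \<le> max C 0 * N1 x" using assms(3) by (simp add: mult_right_mono)
  then show "N1 x + N2 x \<le> (1 + max C 0) * N1 x" using assms(2)[of x] by (simp add: distrib_right)
qed auto

lemma banach_norm_equivalent:
  assumes ban: "banach_norm N" and N': "is_norm N'" and "equivalent_norms N N'"
  shows "banach_norm N'"
  unfolding banach_norm_def
proof (intro conjI allI impI N')
  obtain c C where cC: "0 < c" "0 < C" and lo: "\<And>x. c * N x \<le> N' x" and up: "\<And>x. N' x \<le> C * N x"
    using assms(3) unfolding equivalent_norms_def by blast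
  fix s :: "nat \<Rightarrow> 'a"
  assume cauchy': "\<forall>e>0. \<exists>M. \<forall>m\<ge>M. \<forall>n\<ge>M. N' (s m - s n) < e"
  have "\<exists>M. \<forall>m\<ge>M. \<forall>n\<ge>M. N (s m - s n) < e" if e: "e > 0" for e
  proof -
    obtain M where "\<forall>m\<ge>M. \<forall>n\<ge>M. N' (s m - s n) < c * e"
      using cauchy' mult_pos_pos[OF cC(1) e] by blast
    then have "\<forall>m\<ge>M. \<forall>n\<ge>M. c * N (s m - s n) < c * e" using lo by (meson le_less_trans)
    then show ?thesis using cC by auto
  qed
  then obtain l where "(\<lambda>n. N (s n - l)) \<longlonglongrightarrow> 0" using ban unfolding banach_norm_def by blast
  then have bound: "(\<lambda>n. C * N (s n - l)) \<longlonglongrightarrow> 0" by (rule tendsto_mult_right_zero)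
  have "(\<lambda>n. N' (s n - l)) \<longlonglongrightarrow> 0"
    by (rule tendsto_sandwich[OF _ _ tendsto_const bound]) (auto simp: is_norm_ge_zero[OF N'] up)
  then show "\<exists>l. (\<lambda>n. N' (s n - l)) \<longlonglongrightarrow> 0" by blast
qed

lemma G_banach_space_equivalent_norm:
  assumes X: "G_banach_space G T act N" and N': "is_norm N'" and eqv: "equivalent_norms N N'"
    and inv: "\<forall>g\<in>carrier G. \<forall>x. N' (act g x) = N' x"
  shows "G_banach_space G T act N'"
proof -
  obtain c C where cC: "0 < c" "0 < C" and lo: "\<And>x. c * N x \<le> N' x" and up: "\<And>x. N' x \<le> C * N x"
    using eqv unfolding equivalent_norms_def by blast
  have cont: "\<forall>g0\<in>carrier G. \<forall>x0. \<forall>e>0. \<exists>U d. openin T U \<and> g0 \<in> U \<and> d > 0 \<and>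
                (\<forall>g\<in>U. \<forall>x. N (x - x0) < d \<longrightarrow> N (act g x - act g0 x0) < e)"
    using X unfolding G_banach_space_def by blast
  have "\<exists>U d. openin T U \<and> g0 \<in> U \<and> d > 0 \<and>
          (\<forall>g\<in>U. \<forall>x. N' (x - x0) < d \<longrightarrow> N' (act g x - act g0 x0) < e)"
    if g0: "g0 \<in> carrier G" and e: "e > 0" for g0 x0 e
  proof -
    have "e / C > 0" using e cC by simp
    then obtain U d where U: "openin T U" "g0 \<in> U" "d > 0"
      and Ud: "\<forall>g\<in>U. \<forall>x. N (x - x0) < d \<longrightarrow> N (act g x - act g0 x0) < e / C"
      using cont g0 by meson
    have "N' (act g x - act g0 x0) < e" if g: "g \<in> U" and x: "N' (x - x0) < c * d" for g x
    proof -
      have "c * N (x - x0) < c * d" using lo x by (rule le_less_trans)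
      then have "N (x - x0) < d" using cC by simp
      then have "N (act g x - act g0 x0) < e / C" using Ud g by blast
      then have "C * N (act g x - act g0 x0) < e" using cC by (simp add: field_simps)
      then show ?thesis using up by (rule le_less_trans[rotated])
    qed
    moreover have "c * d > 0" using cC U by simp
    ultimately show ?thesis using U by (intro exI[of _ U] exI[of _ "c * d"]) blast
  qed
  moreover have "banach_norm N'"
    using X N' eqv banach_norm_equivalent unfolding G_banach_space_def by blast
  ultimately show ?thesis using X inv unfolding G_banach_space_def by blast
qed

theorem proposition3p1:
  fixes G :: "('g, 'm) monoid_scheme" and T :: "'g topology"
    and act :: "'g \<Rightarrow> 'a::banach \<Rightarrow> 'a"
  assumes "topological_group G T"
    and "G_banach_space G T act norm"
  shows "((\<exists>N'. is_norm N' \<and> equivalent_norms norm N' \<and> strictly_convex_norm N' \<and>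
              (\<forall>g\<in>carrier G. \<forall>x. N' (act g x) = N' x))
          \<longrightarrow> (\<exists>(NY :: 'a \<Rightarrow> real) actY phi. G_banach_space G T actY NY \<and> strictly_convex_norm NY \<and>
                 bounded_inj_equivariant G act norm actY NY phi))
       \<and> (\<forall>(NY :: 'b::real_vector \<Rightarrow> real) actY (phi :: 'a \<Rightarrow> 'b).
            G_banach_space G T actY NY \<and> strictly_convex_norm NY \<and>
            bounded_inj_equivariant G act norm actY NY phi
          \<longrightarrow> (\<exists>N'. is_norm N' \<and> equivalent_norms norm N' \<and> strictly_convex_norm N' \<and>
              (\<forall>g\<in>carrier G. \<forall>x. N' (act g x) = N' x)))"
proof (intro conjI impI allI; (elim exE conjE)?)
  fix N' assume N': "is_norm N'" "equivalent_norms norm N'" "strictly_convex_norm N'"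
    and inv: "\<forall>g\<in>carrier G. \<forall>x. N' (act g x) = N' x"
  obtain C where "\<And>x. N' x \<le> C * norm x" using N'(2) unfolding equivalent_norms_def by blast
  then have "bounded_inj_equivariant G act norm act N' id"
    unfolding bounded_inj_equivariant_def by (auto simp: linear_id)
  then show "\<exists>(NY :: 'a \<Rightarrow> real) actY phi. G_banach_space G T actY NY \<and> strictly_convex_norm NY \<and>
               bounded_inj_equivariant G act norm actY NY phi"
    using G_banach_space_equivalent_norm[OF assms(2) N'(1,2) inv] N'(3) by blast
next
  fix NY :: "'b \<Rightarrow> real" and actY phi
  assume Y: "G_banach_space G T actY NY" and sc: "strictly_convex_norm NY"
    and phi: "bounded_inj_equivariant G act norm actY NY phi"
  have NY: "is_norm NY" using Y unfolding G_banach_space_def banach_norm_def by blast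
  obtain C where lin: "linear phi" and inj: "inj phi" and bound: "\<And>x. NY (phi x) \<le> C * norm x"
    using phi unfolding bounded_inj_equivariant_def by blast
  have pull: "is_norm (\<lambda>x. NY (phi x))" "strictly_convex_norm (\<lambda>x. NY (phi x))"
    using is_norm_comp_linear[OF NY lin inj] strictly_convex_norm_comp_linear[OF sc lin inj] .
  have "\<forall>g\<in>carrier G. \<forall>x. norm (act g x) + NY (phi (act g x)) = norm x + NY (phi x)"
    using assms(2) Y phi unfolding G_banach_space_def bounded_inj_equivariant_def by simp
  then show "\<exists>N'. is_norm N' \<and> equivalent_norms norm N' \<and> strictly_convex_norm N' \<and>
                     (\<forall>g\<in>carrier G. \<forall>x. N' (act g x) = N' x)"
    using is_norm_add[OF is_norm_norm pull(1)] strictly_convex_norm_add[OF is_norm_norm pull]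
      equivalent_norms_add_dominated[OF pull(1) bound norm_ge_zero]
    by (intro exI[of _ "\<lambda>x. norm x + NY (phi x)"]) blast
qed

end
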